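(* Let $m,n\ge 1$. There exist a constant tensor $\mathbf W=(w_{ijk})\in\mathbb R^{m\times n\times mn}$ and a constant matrix $\mathbf Q\in\mathbb R^{n\times mn}$ such that for every entrywise non-negative matrix $\mathbf X=(x_{ij})\in\mathbb R_{\ge 0}^{m\times n}$ the following holds: defining $y_{ik}=\sum_{j=1}^n x_{ij}w_{ijk}$ for $i\in\{1,\dots,m\}$, $k\in\{1,\dots,mn\}$, and $\hat y_k=\max_{1\le i\le m}y_{ik}$, we have $$\Big(\sum_{i=1}^m x_{ij}\Big)_{j=1}^n=\mathbf Q\,(\hat y_k)_{k=1}^{mn}.$$
   Context: $\mathbf W$ and $\mathbf Q$ do not depend on $\mathbf X$; they depend only on $m$ and $n$. *)

theory Defs
  imports "HOL-Analysis.Analysis"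
begin

end

theory Submission
  imports Defs
begin

text \<open>Index the \<open>m n\<close> columns of \<open>W\<close> by pairs \<open>(i, j)\<close> via \<open>k = i n + j\<close>, and let
  \<open>w\<^sub>i\<^sub>j\<^sub>k = 1\<close> exactly when \<open>k\<close> encodes \<open>(i, j)\<close>. Then \<open>y\<^sub>i\<^sub>k\<close> is \<open>x\<^sub>i\<^sub>j\<close> in row \<open>i\<close> of
  the pair encoded by \<open>k\<close> and \<open>0\<close> in every other row, so by non-negativity the maximum
  \<open>y\<^sub>k\<close> recovers the single entry \<open>x\<^sub>i\<^sub>j\<close>. Summing these entries over all \<open>k\<close> with
  \<open>k mod n = j\<close> gives the \<open>j\<close>-th column sum.\<close>

definition pair_indicator :: "nat \<Rightarrow> nat \<Rightarrow> nat \<Rightarrow> nat \<Rightarrow> real" where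
  "pair_indicator n i j k = (if k = i * n + j then 1 else 0)"

definition residue_indicator :: "nat \<Rightarrow> nat \<Rightarrow> nat \<Rightarrow> real" where
  "residue_indicator n j k = (if k mod n = j then 1 else 0)"

lemma sum_lessThan_mult_pairs:
  fixes f :: "nat \<Rightarrow> 'a :: comm_monoid_add"
  shows "(\<Sum>k<m * n. f k) = (\<Sum>i<m. \<Sum>j<n. f (i * n + j))"
proof (induction m)
  case 0
  then show ?case by simp
next
  case (Suc m)
  have "(\<Sum>k<Suc m * n. f k) = (\<Sum>k<m * n. f k) + (\<Sum>k\<in>{m * n..<m * n + n}. f k)"
    by (simp add: add.commute sum.atLeastLessThan_concat[symmetric] lessThan_atLeast0)
  also have "(\<Sum>k\<in>{m * n..<m * n + n}. f k) = (\<Sum>j<n. f (m * n + j))"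
    by (rule sum.reindex_bij_witness[of _ "\<lambda>j. m * n + j" "\<lambda>k. k - m * n"]) auto
  finally show ?case
    using Suc by simp
qed

lemma pair_encoding_eq_iff:
  fixes i i' j j' n :: nat
  assumes "j < n" "j' < n"
  shows "i' * n + j' = i * n + j \<longleftrightarrow> i' = i \<and> j' = j"
proof
  assume eq: "i' * n + j' = i * n + j"
  then have "(i' * n + j') div n = (i * n + j) div n"
    by simp
  then have "i' = i"
    using assms by simp
  with eq show "i' = i \<and> j' = j"
    by simp
qed simp

lemma Max_single_nonneg:
  fixes x :: "'b :: linordered_ab_group_add"
  assumes "finite A" "a \<in> A" "0 \<le> x"
  shows "(MAX b\<in>A. if b = a then x else 0) = x"
  by (rule Max_eqI) (use assms in auto)

lemma pair_indicator_row:
  fixes X :: "nat \<Rightarrow> nat \<Rightarrow> real"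
  assumes "j < n"
  shows "(\<Sum>j'<n. X i' j' * pair_indicator n i' j' (i * n + j)) = (if i' = i then X i j else 0)"
proof -
  have "(\<Sum>j'<n. X i' j' * pair_indicator n i' j' (i * n + j))
      = (\<Sum>j'<n. if i' = i \<and> j' = j then X i j else 0)"
    using assms by (intro sum.cong) (auto simp: pair_indicator_def pair_encoding_eq_iff)
  then show ?thesis
    using assms by (simp add: sum.If_cases)
qed

lemma Max_pair_indicator:
  fixes X :: "nat \<Rightarrow> nat \<Rightarrow> real"
  assumes "i < m" "j < n" "0 \<le> X i j"
  shows "(MAX i'\<in>{..<m}. \<Sum>j'<n. X i' j' * pair_indicator n i' j' (i * n + j)) = X i j"
proof -
  have "(MAX i'\<in>{..<m}. \<Sum>j'<n. X i' j' * pair_indicator n i' j' (i * n + j))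
      = (MAX i'\<in>{..<m}. if i' = i then X i j else 0)"
    using \<open>j < n\<close> by (simp only: pair_indicator_row)
  also have "\<dots> = X i j"
    using assms by (intro Max_single_nonneg) auto
  finally show ?thesis .
qed

lemma column_sum_from_max_layer:
  fixes X :: "nat \<Rightarrow> nat \<Rightarrow> real"
  assumes nonneg: "\<forall>i<m. \<forall>j<n. 0 \<le> X i j" and "j < n"
  shows "(\<Sum>k<m * n. residue_indicator n j k *
            (MAX i\<in>{..<m}. \<Sum>j'<n. X i j' * pair_indicator n i j' k)) = (\<Sum>i<m. X i j)"
proof -
  have "(\<Sum>k<m * n. residue_indicator n j k *
            (MAX i\<in>{..<m}. \<Sum>j'<n. X i j' * pair_indicator n i j' k))
      = (\<Sum>i<m. \<Sum>j''<n. residue_indicator n j (i * n + j'') *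
            (MAX i'\<in>{..<m}. \<Sum>j'<n. X i' j' * pair_indicator n i' j' (i * n + j'')))"
    by (rule sum_lessThan_mult_pairs)
  also have "\<dots> = (\<Sum>i<m. \<Sum>j''<n. if j'' = j then X i j else 0)"
    using nonneg by (intro sum.cong refl) (simp add: Max_pair_indicator residue_indicator_def)
  also have "\<dots> = (\<Sum>i<m. X i j)"
    using \<open>j < n\<close> by simp
  finally show ?thesis .
qed

theorem proposition3:
  fixes m n :: nat
  assumes "m \<ge> 1" and "n \<ge> 1"
  shows "\<exists>(W :: nat \<Rightarrow> nat \<Rightarrow> nat \<Rightarrow> real) (Q :: nat \<Rightarrow> nat \<Rightarrow> real).
           \<forall>X :: nat \<Rightarrow> nat \<Rightarrow> real.
             (\<forall>i<m. \<forall>j<n. X i j \<ge> 0) \<longrightarrow>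
             (\<forall>j<n. (\<Sum>i<m. X i j) =
                (\<Sum>k<m*n. Q j k * (MAX i\<in>{..<m}. (\<Sum>j'<n. X i j' * W i j' k))))"
  using column_sum_from_max_layer[symmetric]
  by (intro exI[of _ "pair_indicator n"] exI[of _ "residue_indicator n"]) blast

end
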